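(* Let $a,b\in\mathbb{H}$ be nonzero quaternions lying in the same closed orthant of $\mathbb{R}^4$, and let $\lambda,\mu\in\mathbb{H}$. Then \[ \big\|(a+b)^{-1}(a\lambda+b\mu)-\lambda\big\| \le \|\mu-\lambda\|. \]
   Context: A quaternion $w+xi+yj+zk$ is identified with the vector $(w,x,y,z)\in\mathbb{R}^4$, and $\|\cdot\|$ is the Euclidean norm (which is multiplicative on $\mathbb{H}$). Two vectors lie in the same closed orthant if for each coordinate their entries do not have strictly opposite signs. *)

theory Defs
  imports "HOL-Analysis.Analysis"
begin

text \<open>Quaternions w + x i + y j + z k are represented as vectors (w,x,y,z) in real^4,
  with components 1,2,3,4 (w = component 1). The norm is the Euclidean norm of real^4.\<close>

type_synonym quat = "real ^ 4"

definition qmult :: "quat \<Rightarrow> quat \<Rightarrow> quat" where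
  "qmult p q = (\<chi> i.
     if i = 1 then p$1*q$1 - p$2*q$2 - p$3*q$3 - p$4*q$4
     else if i = 2 then p$1*q$2 + p$2*q$1 + p$3*q$4 - p$4*q$3
     else if i = 3 then p$1*q$3 - p$2*q$4 + p$3*q$1 + p$4*q$2
     else p$1*q$4 + p$2*q$3 - p$3*q$2 + p$4*q$1)"

definition qconj :: "quat \<Rightarrow> quat" where
  "qconj p = (\<chi> i. if i = 1 then p$1 else - p$i)"

definition qinv :: "quat \<Rightarrow> quat" where
  "qinv p = (1 / (norm p)^2) *\<^sub>R qconj p"

definition same_closed_orthant :: "quat \<Rightarrow> quat \<Rightarrow> bool" where
  "same_closed_orthant a b \<longleftrightarrow>
     (\<forall>i. \<not> (a$i > 0 \<and> b$i < 0) \<and> \<not> (a$i < 0 \<and> b$i > 0))"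

end

theory Submission
  imports Defs
begin

text \<open>
  Since a l + b m = (a + b) l + b (m - l), the left-hand side equals
  (a + b)^-1 b (m - l), whose norm is |b| |m - l| / |a + b| by multiplicativity of the norm.
  Points of a common closed orthant have nonnegative inner product, so
  |a + b|^2 = |a|^2 + |b|^2 + 2 <a, b> is at least |b|^2 (and |a|^2, whence a + b is nonzero).
\<close>

lemma norm_le_norm_add_if_inner_nonneg:
  fixes a b :: "'a::real_inner"
  assumes "0 \<le> inner a b"
  shows "norm b \<le> norm (a + b)"
proof -
  have "(norm (a + b))\<^sup>2 = (norm a)\<^sup>2 + (norm b)\<^sup>2 + 2 * inner a b"
    by (simp add: power2_norm_eq_inner inner_add_left inner_add_right inner_commute)
  with assms have "(norm b)\<^sup>2 \<le> (norm (a + b))\<^sup>2"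
    by simp
  then show ?thesis
    by (simp add: power2_le_iff_abs_le)
qed

lemma inner_nonneg_if_same_closed_orthant:
  assumes "same_closed_orthant a b"
  shows "0 \<le> inner a b"
proof -
  have "0 \<le> a$i * b$i" for i
    using assms unfolding same_closed_orthant_def
    by (meson linorder_not_le mult_nonneg_nonneg mult_nonpos_nonpos order.strict_iff_not)
  then show ?thesis
    by (simp add: inner_vec_def sum_nonneg)
qed

lemma qmult_nth:
  "qmult p q $ 1 = p$1*q$1 - p$2*q$2 - p$3*q$3 - p$4*q$4"
  "qmult p q $ 2 = p$1*q$2 + p$2*q$1 + p$3*q$4 - p$4*q$3"
  "qmult p q $ 3 = p$1*q$3 - p$2*q$4 + p$3*q$1 + p$4*q$2"
  "qmult p q $ 4 = p$1*q$4 + p$2*q$3 - p$3*q$2 + p$4*q$1"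
  by (simp_all add: qmult_def)

lemma qmult_add_left: "qmult (p + q) r = qmult p r + qmult q r"
  unfolding vec_eq_iff forall_4 by (simp add: qmult_nth algebra_simps)

lemma qmult_add_right: "qmult p (q + r) = qmult p q + qmult p r"
  unfolding vec_eq_iff forall_4 by (simp add: qmult_nth algebra_simps)

lemma power2_norm_quat: "(norm (p::quat))\<^sup>2 = p$1^2 + p$2^2 + p$3^2 + p$4^2"
  unfolding power2_norm_eq_inner by (simp add: inner_vec_def sum_4 power2_eq_square)

text \<open>Euler's four-square identity.\<close>
lemma norm_qmult: "norm (qmult p q) = norm p * norm q"
proof -
  have "(norm (qmult p q))\<^sup>2 = (norm p * norm q)\<^sup>2"
    unfolding power_mult_distrib power2_norm_quat qmult_nth by algebra
  then show ?thesis
    by (simp add: power2_eq_iff_nonneg)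
qed

lemma norm_qconj: "norm (qconj p) = norm p"
proof -
  have "(norm (qconj p))\<^sup>2 = (norm p)\<^sup>2"
    unfolding power2_norm_quat by (simp add: qconj_def)
  then show ?thesis
    by (simp add: power2_eq_iff_nonneg)
qed

lemma norm_qinv: "norm (qinv p) = 1 / norm p"
  by (simp add: qinv_def norm_qconj power2_eq_square)

lemma qmult_qinv_cancel_left:
  assumes "s \<noteq> 0"
  shows "qmult (qinv s) (qmult s q) = q"
proof -
  define N where "N = (norm s)\<^sup>2"
  have N_eq: "N = s$1^2 + s$2^2 + s$3^2 + s$4^2"
    by (simp add: N_def power2_norm_quat)
  have "N \<noteq> 0"
    using assms by (simp add: N_def)
  have qinv_nth: "qinv s $ 1 = s$1 / N" "qinv s $ 2 = - s$2 / N"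
    "qinv s $ 3 = - s$3 / N" "qinv s $ 4 = - s$4 / N"
    by (simp_all add: qinv_def qconj_def N_def)
  show ?thesis
    unfolding vec_eq_iff forall_4 qmult_nth qinv_nth
    using \<open>N \<noteq> 0\<close> N_eq
    by (simp_all add: divide_simps power2_eq_square) (simp_all add: algebra_simps)
qed

theorem lemma4p2:
  fixes a b l m :: quat
  assumes "a \<noteq> 0" and "b \<noteq> 0" and "same_closed_orthant a b"
  shows "norm (qmult (qinv (a + b)) (qmult a l + qmult b m) - l) \<le> norm (m - l)"
proof -
  have "0 \<le> inner a b" "0 \<le> inner b a"
    using assms(3) inner_nonneg_if_same_closed_orthant by (auto simp: inner_commute)
  then have b_le: "norm b \<le> norm (a + b)" and "norm a \<le> norm (a + b)"
    using norm_le_norm_add_if_inner_nonneg[of a b] norm_le_norm_add_if_inner_nonneg[of b a]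
    by (simp_all add: add.commute)
  with assms(1) have "a + b \<noteq> 0"
    by auto
  have "qmult a l + qmult b m = qmult (a + b) l + qmult b (m - l)"
    by (simp add: qmult_add_left flip: qmult_add_right)
  then have "qmult (qinv (a + b)) (qmult a l + qmult b m) - l
      = qmult (qinv (a + b)) (qmult b (m - l))"
    by (simp add: qmult_add_right qmult_qinv_cancel_left[OF \<open>a + b \<noteq> 0\<close>])
  then have "norm (qmult (qinv (a + b)) (qmult a l + qmult b m) - l)
      = norm b / norm (a + b) * norm (m - l)"
    by (simp add: norm_qmult norm_qinv)
  also have "\<dots> \<le> norm (m - l)"
    using b_le \<open>a + b \<noteq> 0\<close> by (intro mult_left_le_one_le) auto
  finally show ?thesis .
qed

end
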